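(* For every integer $n\ge 1$, \[ \sum_{k=0}^{n}\Big(-\frac{1}{4}\Big)^k\binom{n}{k}\binom{2k}{k}\,k^2H_{2k} =\frac{n^2}{4^n(2n-1)(2n-3)}\binom{2n}{n}\Big\{\frac{3}{2}H_n-2H_{2n}+\frac{8n^3-4n^2-10n+3}{n(2n-1)(2n-3)}\Big\}. \]
   Context: For an integer $m\ge 0$, $H_m$ denotes the $m$-th harmonic number: $H_0=0$ and $H_m=\sum_{j=1}^m \frac1j$ for $m\ge1$. $\binom{n}{k}$ is the usual binomial coefficient. *)

theory Defs
  imports "HOL-Analysis.Analysis"
begin

end

theory Submission
  imports Defs
begin

text \<open>Write \<open>b\<^sub>k = (-1/4)^k (2k choose k)\<close>, so the sum is
  \<open>S\<^sub>n = \<Sum>\<^sub>k (n choose k) b\<^sub>k k\<^sup>2 H\<^sub>2\<^sub>k\<close>.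
  Creative telescoping, with certificates found by Zeilberger's algorithm, gives the first-order
  recurrence \<open>S\<^sub>n\<^sub>+\<^sub>1 = (n+1)(2n-3)/(2n\<^sup>2) S\<^sub>n - (n+1)/(4n\<^sup>2) U\<^sub>n\<close>. Its inhomogeneous term
  \<open>U\<^sub>n = \<Sum>\<^sub>k (n choose k) b\<^sub>k k\<^sup>2(4k+3)/(k+1)\<close> satisfies a homogeneous recurrence of its
  own and is therefore hypergeometric in \<open>n\<close>.\<close>

lemma Suc_mult_choose_Suc_real:
  "(real k + 1) * real (Suc n choose Suc k) = (real n + 1) * real (n choose k)"
proof -
  have "real (Suc n * (n choose k)) = real ((Suc n choose Suc k) * Suc k)"
    by (simp only: Suc_times_binomial_eq)
  then show ?thesis by (simp add: algebra_simps)
qed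

lemma diff_mult_Suc_choose_real:
  assumes "k \<le> Suc n"
  shows "(real n + 1 - real k) * real (Suc n choose k) = (real n + 1) * real (n choose k)"
proof -
  have "real ((Suc n - k) * (Suc n choose k)) = real (Suc n * ((Suc n - 1) choose k))"
    by (simp only: binomial_absorb_comp)
  then show ?thesis
    using assms by (simp only: of_nat_mult of_nat_diff of_nat_Suc diff_Suc_1) (simp add: algebra_simps)
qed

lemma central_binomial_Suc_real:
  "(real k + 1) * real (2 * Suc k choose Suc k) = 2 * (2 * real k + 1) * real (2 * k choose k)"
proof -
  have "2 * Suc k = Suc (Suc (2 * k))" by simp
  then have "(real k + 1) * real (2 * Suc k choose Suc k)
      = 2 * ((real k + 1) * real (Suc (2 * k) choose k))"
    using Suc_mult_choose_Suc_real[of k "Suc (2 * k)"]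
    by (simp del: binomial_Suc_Suc add: algebra_simps)
  also have "(real k + 1) * real (Suc (2 * k) choose k) = (2 * real k + 1) * real (2 * k choose k)"
    using diff_mult_Suc_choose_real[of k "2 * k"] by (simp del: binomial_Suc_Suc add: algebra_simps)
  finally show ?thesis by simp
qed

lemma harm_double_Suc:
  "harm (2 * Suc k) = (harm (2 * k) :: real) + 1 / (2 * real k + 1) + 1 / (2 * real k + 2)"
proof -
  have "2 * Suc k = Suc (Suc (2 * k))" by simp
  then show ?thesis by (simp add: harm_Suc inverse_eq_divide add_ac)
qed

lemma two_real_minus_3_neq_0: "2 * real n - 3 \<noteq> 0"
proof
  assume "2 * real n - 3 = 0"
  then have "2 * n = 3" by linarith
  then show False by presburger
qed

text \<open>The name refers to the identity \<open>(-1/4)^k (2k choose k) = (-1/2 gchoose k)\<close>.\<close>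

definition minus_half_choose :: "nat \<Rightarrow> real" where
  "minus_half_choose k = (-1/4) ^ k * real (2 * k choose k)"

lemma minus_half_choose_Suc:
  "2 * (real k + 1) * minus_half_choose (Suc k) = - (2 * real k + 1) * minus_half_choose k"
proof -
  define C where "C = real (2 * Suc k choose Suc k)"
  have "2 * (real k + 1) * minus_half_choose (Suc k) = - (1/2) * (-1/4) ^ k * ((real k + 1) * C)"
    unfolding minus_half_choose_def C_def[symmetric] by (simp add: algebra_simps)
  also have "\<dots> = - (2 * real k + 1) * minus_half_choose k"
    unfolding C_def central_binomial_Suc_real by (simp add: minus_half_choose_def algebra_simps)
  finally show ?thesis .
qed

definition scaled_central_binomial :: "nat \<Rightarrow> real" where
  "scaled_central_binomial n = real (2 * n choose n) / 4 ^ n"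

lemma scaled_central_binomial_Suc:
  "scaled_central_binomial (Suc n) = (2 * real n + 1) / (2 * real n + 2) * scaled_central_binomial n"
proof -
  define C where "C = real (2 * Suc n choose Suc n)"
  have "(real n + 1) * C = 2 * (2 * real n + 1) * real (2 * n choose n)"
    unfolding C_def by (rule central_binomial_Suc_real)
  then have C: "C = 2 * (2 * real n + 1) * real (2 * n choose n) / (real n + 1)"
    by (simp add: field_simps)
  show ?thesis
    unfolding scaled_central_binomial_def C_def[symmetric] C
    by (simp add: divide_simps) (simp add: algebra_simps)
qed

lemma sum_choose_upto_Suc:
  "(\<Sum>k=0..Suc n. real (n choose k) * g k) = (\<Sum>k=0..n. real (n choose k) * g k)"
  by (simp add: sum.atLeast0_atMost_Suc)

lemma creative_telescoping:
  fixes g e T :: "nat \<Rightarrow> real"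
  assumes step: "\<And>k. k \<le> Suc n \<Longrightarrow>
      (a * real (Suc n choose k) - c * real (n choose k)) * g k = T (Suc k) - T k + e k"
    and "T 0 = 0" and "T (Suc (Suc n)) = 0"
  shows "a * (\<Sum>k=0..Suc n. real (Suc n choose k) * g k)
       = c * (\<Sum>k=0..n. real (n choose k) * g k) + (\<Sum>k=0..Suc n. e k)"
proof -
  have "(\<Sum>k=0..Suc n. (a * real (Suc n choose k) - c * real (n choose k)) * g k)
      = (\<Sum>k=0..Suc n. T (Suc k) - T k) + (\<Sum>k=0..Suc n. e k)"
    by (simp add: step sum.distrib)
  also have "(\<Sum>k=0..Suc n. T (Suc k) - T k) = 0"
    using assms(2,3) by (simp add: sum_Suc_diff)
  finally show ?thesis
    by (simp add: sum_subtractf sum_distrib_left sum_choose_upto_Suc algebra_simps)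
qed

definition companion_sum :: "nat \<Rightarrow> real" where
  "companion_sum n =
     (\<Sum>k=0..n. real (n choose k) * (minus_half_choose k * (real k^2 * (4 * real k + 3) / (real k + 1))))"

text \<open>Zeilberger's certificate for \<open>companion_sum\<close>, as a polynomial in \<open>x = n\<close> and \<open>k\<close>.\<close>

definition companion_certificate :: "real \<Rightarrow> real \<Rightarrow> real" where
  "companion_certificate x k = (2*x^3 - 17*x^2 - 40*x - 21) + (-12*x^3 - 30*x^2 - 46*x - 28) * k
     + (18*x^3 + 115*x^2 + 174*x + 77) * k^2 + (-8*x^3 - 68*x^2 - 88*x - 28) * k^3"

lemma companion_certificate_poly:
  fixes x k :: real
  shows "k^2 * (4*k + 3)
         * ((x+1) * (2*(x+2)*(2*x-1)*x*(x+6)) - (2*x+1)*(x+7)*(x+1)*(2*x-3) * (x+1-k))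
     = - (x+1-k) * (2*k+1) * companion_certificate x (k+1) - 2*k*(k+1) * companion_certificate x k"
  unfolding companion_certificate_def by algebra

text \<open>In the applications \<open>B = (n choose k)\<close>, \<open>B' = (n+1 choose k)\<close>, \<open>B1 = (n+1 choose k+1)\<close>,
  \<open>b = b\<^sub>k\<close> and \<open>b1 = b\<^sub>k\<^sub>+\<^sub>1\<close>; only the ratios between them enter.\<close>

lemma companion_certificate_identity:
  fixes x k B B' B1 b b1 :: real
  assumes "k \<ge> 0"
    and B': "(x+1) * B = (x+1-k) * B'" and B1: "(k+1) * B1 = (x+1) * B"
    and b1: "2 * (k+1) * b1 = - (2*k+1) * b"
  shows "((x+1) * (2*(x+2)*(2*x-1)*x*(x+6)) * B' - (x+1) * ((2*x+1)*(x+7)*(x+1)*(2*x-3)) * B)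
           * (b * (k^2 * (4*k+3) / (k+1)))
       = 2 * (B1 * b1 * (k+1) * companion_certificate x (k+1))
         - 2 * (B' * b * k * companion_certificate x k)"
proof -
  define D where "D = (x+1) * (2*(x+2)*(2*x-1)*x*(x+6))"
  define N where "N = (2*x+1)*(x+7)*(x+1)*(2*x-3)"
  define R where "R = companion_certificate x"
  have "k + 1 \<noteq> 0" using \<open>k \<ge> 0\<close> by simp
  then have s: "(k+1) * (k^2 * (4*k+3) / (k+1)) = k^2 * (4*k+3)" by simp
  have "(k+1) * ((D * B' - (x+1) * N * B) * (b * (k^2 * (4*k+3) / (k+1))))
      = ((k+1) * (k^2 * (4*k+3) / (k+1))) * (D * B' - N * ((x+1) * B)) * b"
    by (simp only: mult_ac)
  also have "\<dots> = k^2 * (4*k+3) * (D - N * (x+1-k)) * B' * b"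
    unfolding s B' by (simp add: algebra_simps)
  also have "\<dots> = (- (x+1-k) * (2*k+1) * R (k+1) - 2*k*(k+1) * R k) * B' * b"
    unfolding D_def N_def R_def companion_certificate_poly ..
  also have "\<dots> = ((x+1) * B) * (- (2*k+1) * b) * R (k+1) - 2*k*(k+1) * R k * B' * b"
    unfolding B' by (simp add: algebra_simps)
  also have "\<dots> = (k+1) * (2 * (B1 * b1 * (k+1) * R (k+1)) - 2 * (B' * b * k * R k))"
    unfolding B1[symmetric] b1[symmetric] by (simp add: algebra_simps)
  finally show ?thesis
    using \<open>k + 1 \<noteq> 0\<close> unfolding D_def N_def R_def by simp
qed

lemma companion_sum_recurrence:
  fixes n :: nat
  defines "x \<equiv> real n"
  shows "2*(x+2)*(2*x-1)*x*(x+6) * companion_sum (Suc n)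
       = (2*x+1)*(x+7)*(x+1)*(2*x-3) * companion_sum n"
proof -
  define T where
    "T k = 2 * (real (Suc n choose k) * minus_half_choose k * real k * companion_certificate x (real k))"
    for k
  have "(x+1) * (2*(x+2)*(2*x-1)*x*(x+6)) * companion_sum (Suc n)
      = (x+1) * ((2*x+1)*(x+7)*(x+1)*(2*x-3)) * companion_sum n + (\<Sum>k=0..Suc n. 0)"
    unfolding companion_sum_def
  proof (rule creative_telescoping)
    fix k assume "k \<le> Suc n"
    show "((x+1) * (2*(x+2)*(2*x-1)*x*(x+6)) * real (Suc n choose k)
          - (x+1) * ((2*x+1)*(x+7)*(x+1)*(2*x-3)) * real (n choose k))
          * (minus_half_choose k * (real k^2 * (4 * real k + 3) / (real k + 1)))
        = T (Suc k) - T k + 0"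
      unfolding T_def x_def
      using companion_certificate_identity[OF _
          diff_mult_Suc_choose_real[OF \<open>k \<le> Suc n\<close>, symmetric]
          Suc_mult_choose_Suc_real minus_half_choose_Suc]
      by (simp add: add.commute)
  qed (simp_all add: T_def binomial_eq_0 del: binomial_Suc_Suc)
  moreover have "x + 1 > 0" unfolding x_def by simp
  ultimately show ?thesis by simp
qed

lemma companion_sum_closed_form:
  "n \<ge> 1 \<Longrightarrow> companion_sum n
     = scaled_central_binomial n * (real n * (real n + 6) / ((real n + 1) * (2 * real n - 3)))"
proof (induction n rule: nat_induct_at_least)
  case base
  then show ?case by (simp add: companion_sum_def minus_half_choose_def scaled_central_binomial_def)
next
  case (Suc n)
  define x where "x = real n"
  have "x \<ge> 1" using Suc.hyps unfolding x_def by simp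
  then have nz: "x \<noteq> 0" "x + 1 \<noteq> 0" "x + 2 \<noteq> 0" "x + 6 \<noteq> 0" "2 * x - 1 \<noteq> 0"
    by auto
  have "2 * x - 3 \<noteq> 0" unfolding x_def by (rule two_real_minus_3_neq_0)
  have "2*(x+2)*(2*x-1)*x*(x+6) * companion_sum (Suc n)
      = (2*x+1)*(x+7)*(x+1)*(2*x-3) * companion_sum n"
    unfolding x_def by (rule companion_sum_recurrence)
  moreover have "2*(x+2)*(2*x-1)*x*(x+6) \<noteq> 0"
    using nz by simp
  ultimately have "companion_sum (Suc n)
      = (2*x+1)*(x+7)*(x+1)*(2*x-3) * companion_sum n / (2*(x+2)*(2*x-1)*x*(x+6))"
    by (simp add: field_simps)
  also have "\<dots> = (2*x+1) / (2*x+2) * scaled_central_binomial n * ((x+1)*(x+7) / ((x+2)*(2*x-1)))"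
    unfolding Suc.IH x_def[symmetric] using nz \<open>2 * x - 3 \<noteq> 0\<close>
    by (simp add: divide_simps) (simp add: algebra_simps)
  finally show ?case
    unfolding scaled_central_binomial_Suc x_def by (simp add: algebra_simps)
qed

definition harmonic_sum :: "nat \<Rightarrow> real" where
  "harmonic_sum n = (\<Sum>k=0..n. real (n choose k) * (minus_half_choose k * real k^2 * harm (2 * k)))"

text \<open>Here \<open>B, B', B1, b, b1\<close> play the same roles as above and \<open>h\<close> stands for \<open>H\<^sub>2\<^sub>k\<close>.\<close>

lemma harmonic_certificate_identity:
  fixes x k B B' B1 b b1 h :: real
  assumes "k \<ge> 0" and "x \<noteq> 0"
    and B': "(x+1) * B = (x+1-k) * B'" and B1: "(k+1) * B1 = (x+1) * B"
    and b1: "2 * (k+1) * b1 = - (2*k+1) * b"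
  shows "(B' - (x+1) * (2*x-3) / (2*x^2) * B) * (b * k^2 * h)
       = - (1/x^2) * ((h + 1/(2*k+1) + 1/(2*k+2)) * (B1 * b1 * (k+1)^2 * k^2))
         + (1/x^2) * (h * (B' * b * k^2 * (k-1)^2))
         - (x+1) / (4*x^2) * (B * (b * (k^2 * (4*k+3) / (k+1))))"
proof -
  define s where "s = (4*k+3) / (k+1)"
  define Z where "Z = - (x+1-k) * B' * b / 2"
  have "2 * (B1 * b1 * (k+1)^2) = ((k+1) * B1) * (2 * (k+1) * b1)"
    by (simp add: power2_eq_square)
  also have "\<dots> = - (x+1-k) * (2*k+1) * B' * b"
    unfolding B1 B' b1 by (simp add: algebra_simps)
  finally have "B1 * b1 * (k+1)^2 = (2*k+1) * Z"
    unfolding Z_def by (simp add: field_simps)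
  then have first: "(h + 1/(2*k+1) + 1/(2*k+2)) * (B1 * b1 * (k+1)^2 * k^2)
      = ((h + 1/(2*k+1) + 1/(2*k+2)) * (2*k+1)) * Z * k^2"
    by (simp only: mult_ac)
  have "k + 1 \<noteq> 0" "2*k + 1 \<noteq> 0" "2*k + 2 \<noteq> 0"
    using \<open>k \<ge> 0\<close> by auto
  then have harm_part: "(h + 1/(2*k+1) + 1/(2*k+2)) * (2*k+1) = h * (2*k+1) + s/2"
    unfolding s_def by (simp add: divide_simps) (simp add: algebra_simps)
  have last: "(x+1) / (4*x^2) * (B * (b * (k^2 * (4*k+3) / (k+1))))
      = ((x+1) * B) * b * k^2 * s / (4*x^2)"
    unfolding s_def by (simp add: mult_ac)
  have middle: "(x+1) * (2*x-3) / (2*x^2) * B = (2*x-3) / (2*x^2) * ((x+1) * B)"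
    by simp
  show ?thesis
    unfolding first harm_part last middle B' Z_def using \<open>x \<noteq> 0\<close>
    by (simp add: field_simps) algebra
qed

lemma harmonic_sum_recurrence:
  fixes n :: nat
  defines "x \<equiv> real n"
  assumes "n \<ge> 1"
  shows "harmonic_sum (Suc n)
       = (x+1) * (2*x-3) / (2*x^2) * harmonic_sum n - (x+1) / (4*x^2) * companion_sum n"
proof -
  define T where
    "T k = - (1/x^2) * (harm (2 * k) * (real (Suc n choose k) * minus_half_choose k
                                         * real k^2 * (real k - 1)^2))"
    for k
  define e where
    "e k = - ((x+1) / (4*x^2))
           * (real (n choose k) * (minus_half_choose k * (real k^2 * (4 * real k + 3) / (real k + 1))))"
    for k
  have "x \<noteq> 0" using \<open>n \<ge> 1\<close> unfolding x_def by simp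
  have "1 * harmonic_sum (Suc n) = (x+1) * (2*x-3) / (2*x^2) * harmonic_sum n + (\<Sum>k=0..Suc n. e k)"
    unfolding harmonic_sum_def
  proof (rule creative_telescoping)
    fix k assume "k \<le> Suc n"
    have "T (Suc k) = - (1/x^2) * ((harm (2 * k) + 1 / (2 * real k + 1) + 1 / (2 * real k + 2))
        * (real (Suc n choose Suc k) * minus_half_choose (Suc k) * (real k + 1)^2 * real k^2))"
      unfolding T_def harm_double_Suc by (simp del: binomial_Suc_Suc)
    moreover have "(x+1) * real (n choose k) = (x+1 - real k) * real (Suc n choose k)"
      "(real k + 1) * real (Suc n choose Suc k) = (x+1) * real (n choose k)"
      unfolding x_def using diff_mult_Suc_choose_real[OF \<open>k \<le> Suc n\<close>] Suc_mult_choose_Suc_real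
      by simp_all
    ultimately show "(1 * real (Suc n choose k) - (x+1) * (2*x-3) / (2*x^2) * real (n choose k))
          * (minus_half_choose k * real k^2 * harm (2 * k))
        = T (Suc k) - T k + e k"
      unfolding T_def[of k] e_def
      using harmonic_certificate_identity[where h = "harm (2 * k)",
          OF of_nat_0_le_iff \<open>x \<noteq> 0\<close> _ _ minus_half_choose_Suc]
      by simp
  qed (simp_all add: T_def binomial_eq_0 del: binomial_Suc_Suc)
  also have "(\<Sum>k=0..Suc n. e k) = - ((x+1) / (4*x^2)) * companion_sum n"
    unfolding e_def companion_sum_def by (simp only: sum_distrib_left[symmetric] sum_choose_upto_Suc)
  finally show ?thesis by simp
qed

lemma harmonic_sum_closed_form:
  "n \<ge> 1 \<Longrightarrow> harmonic_sum n
     = (real n)^2 / ((2 * real n - 1) * (2 * real n - 3)) * scaled_central_binomial n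
       * (3/2 * harm n - 2 * harm (2 * n)
          + (8 * (real n)^3 - 4 * (real n)^2 - 10 * real n + 3)
            / (real n * (2 * real n - 1) * (2 * real n - 3)))"
proof (induction n rule: nat_induct_at_least)
  case base
  have "harm 2 = (3/2 :: real)"
    by (simp add: harm_Suc numeral_2_eq_2 harm_def)
  then show ?case
    by (simp add: harmonic_sum_def minus_half_choose_def scaled_central_binomial_def harm_def)
next
  case (Suc n)
  define x where "x = real n"
  have "x \<ge> 1" using Suc.hyps unfolding x_def by simp
  then have nz: "x \<noteq> 0" "x + 1 \<noteq> 0" "2 * x + 1 \<noteq> 0" "2 * x + 2 \<noteq> 0" "2 * x - 1 \<noteq> 0"
    by auto
  have "2 * x - 3 \<noteq> 0" unfolding x_def by (rule two_real_minus_3_neq_0)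
  have "harmonic_sum (Suc n)
      = (x+1) * (2*x-3) / (2*x^2) * harmonic_sum n - (x+1) / (4*x^2) * companion_sum n"
    unfolding x_def using Suc.hyps by (rule harmonic_sum_recurrence)
  also have "\<dots> = (x+1)^2 / ((2*x+1) * (2*x-1)) * ((2*x+1) / (2*x+2) * scaled_central_binomial n)
      * (3/2 * (harm n + 1/(x+1)) - 2 * (harm (2*n) + 1/(2*x+1) + 1/(2*x+2))
         + (8*(x+1)^3 - 4*(x+1)^2 - 10*(x+1) + 3) / ((x+1) * (2*x+1) * (2*x-1)))"
    unfolding Suc.IH companion_sum_closed_form[OF Suc.hyps] x_def[symmetric]
    using nz \<open>2 * x - 3 \<noteq> 0\<close> by (simp add: divide_simps) algebra
  also have "\<dots> = (real (Suc n))^2 / ((2 * real (Suc n) - 1) * (2 * real (Suc n) - 3))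
       * scaled_central_binomial (Suc n)
       * (3/2 * harm (Suc n) - 2 * harm (2 * Suc n)
          + (8 * (real (Suc n))^3 - 4 * (real (Suc n))^2 - 10 * real (Suc n) + 3)
            / (real (Suc n) * (2 * real (Suc n) - 1) * (2 * real (Suc n) - 3)))"
  proof -
    have "real (Suc n) = x + 1" "harm (Suc n) = harm n + 1 / (x + 1)"
      unfolding x_def by (simp_all add: harm_Suc inverse_eq_divide add.commute)
    then show ?thesis
      unfolding scaled_central_binomial_Suc harm_double_Suc x_def[symmetric]
      by (simp add: algebra_simps)
  qed
  finally show ?case .
qed

theorem theorem9:
  fixes n :: nat
  assumes "n \<ge> 1"
  shows "(\<Sum>k=0..n. (-1/4::real)^k * real (n choose k) * real ((2*k) choose k)
            * (real k)^2 * harm (2*k))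
       = (real n)^2 / (4^n * (2 * real n - 1) * (2 * real n - 3)) * real ((2*n) choose n)
         * (3/2 * harm n - 2 * harm (2*n)
            + (8 * (real n)^3 - 4 * (real n)^2 - 10 * real n + 3)
              / (real n * (2 * real n - 1) * (2 * real n - 3)))"
proof -
  have "(\<Sum>k=0..n. (-1/4::real)^k * real (n choose k) * real ((2*k) choose k)
            * (real k)^2 * harm (2*k)) = harmonic_sum n"
    unfolding harmonic_sum_def minus_half_choose_def by (simp add: mult_ac)
  then show ?thesis
    unfolding harmonic_sum_closed_form[OF assms] scaled_central_binomial_def by (simp add: mult_ac)
qed

end
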